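(* Let $k$ be an algebraically closed field of characteristic zero. Let $A$ be an integral normal $k$-algebra of finite type endowed with a locally nilpotent $k$-derivation $\partial$, let $F_n=\ker\partial^{n+1}$ ($n\geq0$), $F_{-1}=\{0\}$, and let $R(A,\partial)=\bigoplus_{n\geq0}F_n$ be its Rees algebra. The following are equivalent: (1) $R(A,\partial)$ is finitely generated over $k$; (2) the associated graded algebra $\mathrm{gr}_\partial A=\bigoplus_{n\geq0}F_n/F_{n-1}$ is finitely generated over $k$; (3) the $k$-algebra $A_0=F_0=\ker\partial$ is finitely generated and $R(A,\partial)_+=\bigoplus_{n>0}F_n$ is a finitely generated $R(A,\partial)$-module.
   Context: $R(A,\partial)$ and $\mathrm{gr}_\partial A$ carry the multiplication induced by that of $A$ (note $F_mF_n\subseteq F_{m+n}$). Equivalently $R(A,\partial)$ is the graded subalgebra $\bigoplus_n F_n\upsilon^n$ of $A[\upsilon]$. *)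

theory Defs
  imports "HOL-Computational_Algebra.Polynomial" "HOL-Computational_Algebra.Fraction_Field"
begin

text \<open>The ground field k is represented as a subfield K of the (integral) k-algebra A,
  which is the whole of the type 'a (an integral domain).\<close>

definition subfield :: "'a::comm_ring_1 set \<Rightarrow> bool" where
  "subfield K \<longleftrightarrow> 0 \<in> K \<and> 1 \<in> K \<and> (\<forall>x\<in>K. \<forall>y\<in>K. x + y \<in> K \<and> x * y \<in> K) \<and>
     (\<forall>x\<in>K. - x \<in> K) \<and> (\<forall>x\<in>K. x \<noteq> 0 \<longrightarrow> (\<exists>y\<in>K. x * y = 1))"

definition alg_closed_sub :: "'a::comm_ring_1 set \<Rightarrow> bool" where
  "alg_closed_sub K \<longleftrightarrow> (\<forall>p::'a poly. (\<forall>i. coeff p i \<in> K) \<and> degree p \<ge> 1 \<longrightarrow>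
      (\<exists>x\<in>K. poly p x = 0))"

definition char_zero_ring :: "'a::comm_ring_1 itself \<Rightarrow> bool" where
  "char_zero_ring _ \<longleftrightarrow> (\<forall>n::nat. n > 0 \<longrightarrow> (of_nat n :: 'a) \<noteq> 0)"

inductive_set alg_gen :: "'b::comm_ring_1 set \<Rightarrow> 'b set \<Rightarrow> 'b set" for K S where
  scal: "c \<in> K \<Longrightarrow> c \<in> alg_gen K S"
| gen: "s \<in> S \<Longrightarrow> s \<in> alg_gen K S"
| add: "x \<in> alg_gen K S \<Longrightarrow> y \<in> alg_gen K S \<Longrightarrow> x + y \<in> alg_gen K S"
| mult: "x \<in> alg_gen K S \<Longrightarrow> y \<in> alg_gen K S \<Longrightarrow> x * y \<in> alg_gen K S"

definition fin_gen_alg :: "'b::comm_ring_1 set \<Rightarrow> 'b set \<Rightarrow> bool" where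
  "fin_gen_alg K B \<longleftrightarrow> (\<exists>S. finite S \<and> S \<subseteq> B \<and> alg_gen K S = B)"

text \<open>The quotient algebra B/N (N an ideal of B) is finitely generated over K:
  the images of finitely many elements of B generate B/N, i.e. every element of B
  is congruent mod N to an element of the subalgebra generated by them.\<close>
definition fin_gen_alg_mod :: "'b::comm_ring_1 set \<Rightarrow> 'b set \<Rightarrow> 'b set \<Rightarrow> bool" where
  "fin_gen_alg_mod K B N \<longleftrightarrow>
     (\<exists>S. finite S \<and> S \<subseteq> B \<and> (\<forall>b\<in>B. \<exists>g\<in>alg_gen K S. b - g \<in> N))"

definition fin_gen_module :: "'b::comm_ring_1 set \<Rightarrow> 'b set \<Rightarrow> bool" where
  "fin_gen_module B M \<longleftrightarrow> (\<exists>T. finite T \<and> T \<subseteq> M \<and>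
     M = {\<Sum>t\<in>T. r t * t | r. \<forall>t\<in>T. r t \<in> B})"

definition finite_type_alg :: "'a::comm_ring_1 set \<Rightarrow> bool" where
  "finite_type_alg K \<longleftrightarrow> fin_gen_alg K (UNIV :: 'a set)"

definition normal_domain :: "'a::idom itself \<Rightarrow> bool" where
  "normal_domain _ \<longleftrightarrow> (\<forall>x :: 'a fract. (\<exists>p :: 'a poly. lead_coeff p = 1 \<and>
      poly (map_poly (\<lambda>a. Fract a 1) p) x = 0) \<longrightarrow> (\<exists>a::'a. x = Fract a 1))"

definition k_derivation :: "'a::comm_ring_1 set \<Rightarrow> ('a \<Rightarrow> 'a) \<Rightarrow> bool" where
  "k_derivation K D \<longleftrightarrow> (\<forall>a b. D (a + b) = D a + D b) \<and>
     (\<forall>a b. D (a * b) = a * D b + b * D a) \<and> (\<forall>c\<in>K. \<forall>a. D (c * a) = c * D a)"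

definition locally_nilpotent :: "('a::zero \<Rightarrow> 'a) \<Rightarrow> bool" where
  "locally_nilpotent D \<longleftrightarrow> (\<forall>a. \<exists>n. (D ^^ n) a = 0)"

definition filt :: "('a::zero \<Rightarrow> 'a) \<Rightarrow> nat \<Rightarrow> 'a set" where
  "filt D n = {a. (D ^^ Suc n) a = 0}"

definition filt_prev :: "('a::zero \<Rightarrow> 'a) \<Rightarrow> nat \<Rightarrow> 'a set" where
  "filt_prev D n = (if n = 0 then {0} else filt D (n - 1))"

text \<open>Rees algebra R(A,D) = sum of F_n v^n inside A[v].\<close>
definition rees :: "('a::comm_ring_1 \<Rightarrow> 'a) \<Rightarrow> 'a poly set" where
  "rees D = {p. \<forall>n. coeff p n \<in> filt D n}"

text \<open>The ideal sum of F_(n-1) v^n of R(A,D); gr_D A = R(A,D) modulo it, i.e.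
  the direct sum of F_n/F_(n-1) with the induced multiplication.\<close>
definition gr_ideal :: "('a::comm_ring_1 \<Rightarrow> 'a) \<Rightarrow> 'a poly set" where
  "gr_ideal D = {p. \<forall>n. coeff p n \<in> filt_prev D n}"

definition rees_plus :: "('a::comm_ring_1 \<Rightarrow> 'a) \<Rightarrow> 'a poly set" where
  "rees_plus D = {p \<in> rees D. coeff p 0 = 0}"

definition const_polys :: "'a::zero set \<Rightarrow> 'a poly set" where
  "const_polys K = (\<lambda>c. [:c:]) ` K"

end

theory Submission
  imports Defs
begin

(* R(A,D) is the graded subalgebra of A[v] with homogeneous parts F_n v^n; it contains v,
   its degree-0 part is F_0, and gr_D A = R/vR. After replacing generators by their homogeneous parts, one shows by induction on n
   that a finite set generates every a v^n with a in F_n: for (2) => (1), a v^n agrees with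
   a generated element up to v times an element of degree n - 1; for (3) => (1), a v^n with
   n > 0 is an R-combination of the module generators of R_+, whose coefficients only
   contribute in degrees < n. Conversely, the constant terms of generators of R generate F_0,
   and the generators with their constant terms removed generate R_+ as an R-module. *)

lemma alg_gen_sum:
  assumes "0 \<in> alg_gen K S" "finite I" "\<And>i. i \<in> I \<Longrightarrow> f i \<in> alg_gen K S"
  shows "sum f I \<in> alg_gen K S"
  using assms(2,3) by (induction I rule: finite_induct) (auto simp: assms(1) intro: alg_gen.add)

lemma alg_gen_minimal:
  assumes "K \<subseteq> B" "S \<subseteq> B" "\<And>x y. x \<in> B \<Longrightarrow> y \<in> B \<Longrightarrow> x + y \<in> B"
    "\<And>x y. x \<in> B \<Longrightarrow> y \<in> B \<Longrightarrow> x * y \<in> B"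
  shows "alg_gen K S \<subseteq> B"
proof
  fix x assume "x \<in> alg_gen K S" then show "x \<in> B"
    by (induction rule: alg_gen.induct) (use assms in auto)
qed

lemma alg_gen_mono: "S \<subseteq> alg_gen K T \<Longrightarrow> alg_gen K S \<subseteq> alg_gen K T"
  by (rule alg_gen_minimal) (auto intro: alg_gen.scal alg_gen.add alg_gen.mult)

lemma alg_gen_image:
  assumes "\<And>x y. h (x + y) = h x + h y" "\<And>x y. h (x * y) = h x * h y"
    and "x \<in> alg_gen K S"
  shows "h x \<in> alg_gen (h ` K) (h ` S)"
  using assms(3) by (induction rule: alg_gen.induct) (auto simp: assms(1,2) intro: alg_gen.intros)

lemma coeff_0_mem_alg_gen:
  assumes "x \<in> alg_gen (const_polys K) S"
  shows "coeff x 0 \<in> alg_gen K ((\<lambda>s. coeff s 0) ` S)"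
proof -
  have "(\<lambda>p. coeff p 0) ` const_polys K = K"
    unfolding const_polys_def image_image by simp
  then show ?thesis
    using alg_gen_image[of "\<lambda>p. coeff p 0", OF _ _ assms] by (simp add: coeff_mult_0)
qed

lemma const_poly_mem_alg_gen:
  fixes K :: "'a::comm_ring_1 set"
  assumes "c \<in> alg_gen K S"
  shows "[:c:] \<in> alg_gen (const_polys K) ((\<lambda>c. [:c:]) ` S)"
  using alg_gen_image[of "\<lambda>c. [:c:]", OF _ _ assms] unfolding const_polys_def by simp

definition homog_part :: "nat \<Rightarrow> 'a::zero poly \<Rightarrow> 'a poly" where
  "homog_part n p = monom (coeff p n) n"

definition homog_parts :: "'a::zero poly set \<Rightarrow> 'a poly set" where
  "homog_parts S = (\<Union>s\<in>S. (\<lambda>n. homog_part n s) ` {..degree s})"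

lemma homog_part_add: "homog_part n (p + q) = homog_part n p + homog_part n q"
  unfolding homog_part_def by (simp add: add_monom)

lemma homog_part_sum: "homog_part n (sum f I) = (\<Sum>i\<in>I. homog_part n (f i))"
  unfolding homog_part_def by (simp add: coeff_sum monom_sum)

lemma homog_part_mult:
  fixes p q :: "'a::comm_ring_1 poly"
  shows "homog_part n (p * q) = (\<Sum>i\<le>n. homog_part i p * homog_part (n - i) q)"
  unfolding homog_part_def coeff_mult monom_sum by (simp add: mult_monom)

lemma homog_part_monom: "homog_part n (monom a m) = (if n = m then monom a m else 0)"
  unfolding homog_part_def by (auto simp: coeff_monom)

lemma homog_part_eq_0: "degree p < n \<Longrightarrow> homog_part n p = 0"
  unfolding homog_part_def by (simp add: coeff_eq_0)

lemma sum_homog_parts: "(\<Sum>n\<le>degree p. homog_part n p) = p"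
  unfolding homog_part_def by (simp add: poly_as_sum_of_monoms)

lemma finite_homog_parts: "finite S \<Longrightarrow> finite (homog_parts S)"
  unfolding homog_parts_def by auto

lemma homog_parts_monom: "s \<in> homog_parts S \<Longrightarrow> \<exists>a m. s = monom a m"
  unfolding homog_parts_def homog_part_def by auto

context
  fixes K :: "'a::comm_ring_1 set"
  assumes zero_mem: "0 \<in> K"
begin

lemma zero_mem_alg_gen_const_polys: "0 \<in> alg_gen (const_polys K) S"
  using zero_mem by (metis alg_gen.scal const_polys_def image_eqI pCons_0_0)

lemma mem_alg_gen_if_homog_parts:
  "(\<And>n. homog_part n p \<in> alg_gen (const_polys K) G) \<Longrightarrow> p \<in> alg_gen (const_polys K) G"
  by (metis alg_gen_sum finite_atMost sum_homog_parts zero_mem_alg_gen_const_polys)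

lemma homog_part_mem_alg_gen_homog_parts:
  assumes "homog_parts S \<subseteq> G" "s \<in> S"
  shows "homog_part n s \<in> alg_gen (const_polys K) G"
proof (cases "n \<le> degree s")
  case True
  then show ?thesis using assms by (auto simp: homog_parts_def intro: alg_gen.gen)
qed (simp add: homog_part_eq_0 zero_mem_alg_gen_const_polys)

lemma alg_gen_subset_alg_gen_homog_parts:
  "homog_parts S \<subseteq> G \<Longrightarrow> alg_gen (const_polys K) S \<subseteq> alg_gen (const_polys K) G"
  by (meson alg_gen_mono subsetI mem_alg_gen_if_homog_parts homog_part_mem_alg_gen_homog_parts)

lemma homog_part_mem_alg_gen:
  assumes monoms: "\<forall>s\<in>G. \<exists>a m. s = monom a m"
    and "x \<in> alg_gen (const_polys K) G"
  shows "homog_part n x \<in> alg_gen (const_polys K) G"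
  using assms(2)
proof (induction arbitrary: n rule: alg_gen.induct)
  case (scal c)
  then obtain a where "c = monom a 0" by (auto simp: const_polys_def monom_0)
  then have "homog_part n c = (if n = 0 then c else 0)" by (simp add: homog_part_monom)
  then show ?case using scal by (simp add: alg_gen.scal zero_mem_alg_gen_const_polys)
next
  case (gen s)
  then obtain a m where "s = monom a m" using monoms by auto
  then have "homog_part n s = (if n = m then s else 0)" by (simp add: homog_part_monom)
  then show ?case using gen by (simp add: alg_gen.gen zero_mem_alg_gen_const_polys)
next
  case (add x y)
  then show ?case by (simp add: homog_part_add alg_gen.add)
next
  case (mult x y)
  show ?case unfolding homog_part_mult
    by (intro alg_gen_sum zero_mem_alg_gen_const_polys finite_atMost alg_gen.mult mult.IH)
qed

end

definition module_span :: "'b::comm_ring_1 set \<Rightarrow> 'b set \<Rightarrow> 'b set" where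
  "module_span B T = {\<Sum>t\<in>T. r t * t | r. \<forall>t\<in>T. r t \<in> B}"

lemma fin_gen_module_iff:
  "fin_gen_module B M \<longleftrightarrow> (\<exists>T. finite T \<and> T \<subseteq> M \<and> M = module_span B T)"
  unfolding fin_gen_module_def module_span_def ..

lemma zero_mem_module_span: "0 \<in> B \<Longrightarrow> 0 \<in> module_span B T"
  unfolding module_span_def by (auto intro!: exI[of _ "\<lambda>_. 0"])

lemma mem_module_span:
  assumes "0 \<in> B" "1 \<in> B" "finite T" "t \<in> T"
  shows "t \<in> module_span B T"
proof -
  have "(\<Sum>t'\<in>T. (if t' = t then 1 else 0) * t') = (\<Sum>t'\<in>T. if t' = t then t' else 0)"
    by (rule sum.cong) auto
  then have "t = (\<Sum>t'\<in>T. (if t' = t then 1 else 0) * t')"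
    using assms(3,4) by simp
  then show ?thesis
    unfolding module_span_def using assms(1,2) by (auto intro!: exI[of _ "\<lambda>t'. if t' = t then 1 else 0"])
qed

lemma module_span_add:
  assumes "\<And>x y. x \<in> B \<Longrightarrow> y \<in> B \<Longrightarrow> x + y \<in> B"
    and "x \<in> module_span B T" "y \<in> module_span B T"
  shows "x + y \<in> module_span B T"
proof -
  obtain r s where "\<forall>t\<in>T. r t \<in> B" "x = (\<Sum>t\<in>T. r t * t)" "\<forall>t\<in>T. s t \<in> B" "y = (\<Sum>t\<in>T. s t * t)"
    using assms(2,3) unfolding module_span_def by auto
  moreover from this have "x + y = (\<Sum>t\<in>T. (r t + s t) * t)"
    by (simp add: sum.distrib distrib_right)
  ultimately show ?thesis unfolding module_span_def using assms(1) by auto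
qed

lemma module_span_mult:
  assumes "\<And>x y. x \<in> B \<Longrightarrow> y \<in> B \<Longrightarrow> x * y \<in> B"
    and "b \<in> B" "x \<in> module_span B T"
  shows "b * x \<in> module_span B T"
proof -
  obtain r where "\<forall>t\<in>T. r t \<in> B" "x = (\<Sum>t\<in>T. r t * t)"
    using assms(3) unfolding module_span_def by auto
  moreover from this have "b * x = (\<Sum>t\<in>T. (b * r t) * t)"
    by (simp add: sum_distrib_left mult.assoc)
  ultimately show ?thesis unfolding module_span_def using assms(1,2) by auto
qed

lemma filt_0_iff: "a \<in> filt D 0 \<longleftrightarrow> D a = 0"
  by (simp add: filt_def)

lemma filt_Suc_iff: "a \<in> filt D (Suc n) \<longleftrightarrow> D a \<in> filt D n"
  unfolding filt_def by (simp only: mem_Collect_eq funpow_Suc_right o_apply)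

locale derivation_filtration =
  fixes K :: "'a::comm_ring_1 set" and D :: "'a \<Rightarrow> 'a"
  assumes derivation: "k_derivation K D"
begin

lemma D_add: "D (a + b) = D a + D b"
  using derivation unfolding k_derivation_def by blast

lemma D_mult: "D (a * b) = a * D b + b * D a"
  using derivation unfolding k_derivation_def by blast

lemma D_diff: "D (a - b) = D a - D b"
  using D_add[of "a - b" b] by simp

lemma D_0: "D 0 = 0"
  using D_diff[of 0 0] by simp

lemma D_scalar: "c \<in> K \<Longrightarrow> D c = 0"
  using derivation D_mult[of 1 1] unfolding k_derivation_def by (metis mult_1 mult_zero_right add_cancel_right_left)

lemma funpow_D_add: "(D ^^ n) (a + b) = (D ^^ n) a + (D ^^ n) b"
  by (induction n) (simp_all add: D_add)

lemma funpow_D_diff: "(D ^^ n) (a - b) = (D ^^ n) a - (D ^^ n) b"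
  by (induction n) (simp_all add: D_diff)

lemma zero_mem_filt: "0 \<in> filt D n"
  using funpow_D_diff[of "Suc n" 0 0] by (simp add: filt_def del: funpow.simps)

lemma filt_add: "a \<in> filt D n \<Longrightarrow> b \<in> filt D n \<Longrightarrow> a + b \<in> filt D n"
  unfolding filt_def by (simp add: funpow_D_add del: funpow.simps)

lemma filt_diff: "a \<in> filt D n \<Longrightarrow> b \<in> filt D n \<Longrightarrow> a - b \<in> filt D n"
  unfolding filt_def by (simp add: funpow_D_diff del: funpow.simps)

lemma filt_sum: "finite I \<Longrightarrow> (\<And>i. i \<in> I \<Longrightarrow> f i \<in> filt D n) \<Longrightarrow> sum f I \<in> filt D n"
  by (induction I rule: finite_induct) (simp_all add: zero_mem_filt filt_add)

lemma filt_mono: "m \<le> n \<Longrightarrow> filt D m \<subseteq> filt D n"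
proof (rule lift_Suc_mono_le)
  show "filt D k \<subseteq> filt D (Suc k)" for k
    unfolding filt_def by (auto simp: D_0)
qed

lemma scalar_mem_filt: "c \<in> K \<Longrightarrow> c \<in> filt D n"
  using filt_mono[of 0 n] by (auto simp: filt_0_iff D_scalar)

lemma one_mem_filt: "1 \<in> filt D n"
  using filt_mono[of 0 n] D_mult[of 1 1] by (auto simp: filt_0_iff)

lemma filt_mult: "a \<in> filt D m \<Longrightarrow> b \<in> filt D n \<Longrightarrow> a * b \<in> filt D (m + n)"
proof (induction "m + n" arbitrary: m n a b)
  case 0
  then show ?case by (simp add: filt_0_iff D_mult)
next
  case (Suc s)
  have factor: "x * D y \<in> filt D s" if "x \<in> filt D i" "y \<in> filt D j" "i + j = Suc s" for i j x y
  proof (cases j)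
    case 0
    then show ?thesis using that(2) by (simp add: filt_0_iff zero_mem_filt)
  next
    case (Suc j')
    then show ?thesis using Suc.hyps(1)[of i j' x "D y"] that by (simp add: filt_Suc_iff)
  qed
  have "D (a * b) \<in> filt D s"
    unfolding D_mult using factor[OF Suc.prems] factor[OF Suc.prems(2,1)] Suc.hyps(2)
    by (simp add: filt_add add.commute)
  then show ?case by (simp add: Suc.hyps(2)[symmetric] filt_Suc_iff)
qed

lemma zero_mem_rees: "0 \<in> rees D"
  by (simp add: rees_def zero_mem_filt)

lemma rees_add: "p \<in> rees D \<Longrightarrow> q \<in> rees D \<Longrightarrow> p + q \<in> rees D"
  by (simp add: rees_def filt_add)

lemma rees_diff: "p \<in> rees D \<Longrightarrow> q \<in> rees D \<Longrightarrow> p - q \<in> rees D"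
  by (simp add: rees_def filt_diff)

lemma rees_mult:
  assumes "p \<in> rees D" "q \<in> rees D"
  shows "p * q \<in> rees D"
  unfolding rees_def mem_Collect_eq coeff_mult
proof (intro allI filt_sum)
  fix n i :: nat assume "i \<in> {..n}"
  then show "coeff p i * coeff q (n - i) \<in> filt D n"
    using filt_mult[of "coeff p i" i "coeff q (n - i)" "n - i"] assms by (simp add: rees_def)
qed simp

lemma rees_sum: "finite I \<Longrightarrow> (\<And>i. i \<in> I \<Longrightarrow> f i \<in> rees D) \<Longrightarrow> sum f I \<in> rees D"
  by (induction I rule: finite_induct) (simp_all add: zero_mem_rees rees_add)

lemma monom_mem_rees_iff: "monom a n \<in> rees D \<longleftrightarrow> a \<in> filt D n"
  unfolding rees_def by (auto simp: coeff_monom zero_mem_filt)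

lemma homog_part_mem_rees: "p \<in> rees D \<Longrightarrow> homog_part n p \<in> rees D"
  unfolding homog_part_def monom_mem_rees_iff by (simp add: rees_def)

lemma const_poly_mem_rees_iff: "[:c:] \<in> rees D \<longleftrightarrow> c \<in> filt D 0"
  using monom_mem_rees_iff[of c 0] by (simp add: monom_0)

lemma const_coeff_mem_rees: "p \<in> rees D \<Longrightarrow> [:coeff p 0:] \<in> rees D"
  unfolding const_poly_mem_rees_iff by (simp add: rees_def)

lemma const_polys_subset_rees: "const_polys K \<subseteq> rees D"
  by (auto simp: const_polys_def const_poly_mem_rees_iff scalar_mem_filt)

lemma one_mem_rees: "1 \<in> rees D"
  using const_poly_mem_rees_iff[of 1] by (simp add: one_pCons one_mem_filt)

lemma monom_1_1_mem_rees: "monom 1 1 \<in> rees D"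
  by (simp add: monom_mem_rees_iff one_mem_filt)

lemma alg_gen_subset_rees: "S \<subseteq> rees D \<Longrightarrow> alg_gen (const_polys K) S \<subseteq> rees D"
  by (rule alg_gen_minimal) (simp_all add: const_polys_subset_rees rees_add rees_mult)

lemma module_span_subset_rees_plus:
  assumes "T \<subseteq> rees_plus D"
  shows "module_span (rees D) T \<subseteq> rees_plus D"
proof
  fix x assume "x \<in> module_span (rees D) T"
  then obtain r where r: "\<forall>t\<in>T. r t \<in> rees D" and x: "x = (\<Sum>t\<in>T. r t * t)"
    unfolding module_span_def by blast
  have "x \<in> rees D"
    using r assms unfolding x rees_plus_def
    by (cases "finite T") (auto intro!: rees_sum rees_mult simp: zero_mem_rees)
  moreover have "coeff x 0 = 0"
    using assms unfolding x rees_plus_def by (auto simp: coeff_sum coeff_mult_0 intro!: sum.neutral)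
  ultimately show "x \<in> rees_plus D"
    by (simp add: rees_plus_def)
qed

lemma zero_mem_gr_ideal: "0 \<in> gr_ideal D"
  by (simp add: gr_ideal_def filt_prev_def zero_mem_filt)

end

locale rees_setting = derivation_filtration +
  assumes zero_mem_scalars: "0 \<in> K"
begin

lemma fin_gen_alg_reesI:
  assumes "finite G" "G \<subseteq> rees D"
    and monoms: "\<And>a n. a \<in> filt D n \<Longrightarrow> monom a n \<in> alg_gen (const_polys K) G"
  shows "fin_gen_alg (const_polys K) (rees D)"
proof -
  have "rees D \<subseteq> alg_gen (const_polys K) G"
  proof
    fix p assume "p \<in> rees D"
    then have "homog_part n p \<in> alg_gen (const_polys K) G" for n
      by (simp add: homog_part_def monoms rees_def)
    then show "p \<in> alg_gen (const_polys K) G"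
      by (rule mem_alg_gen_if_homog_parts[OF zero_mem_scalars])
  qed
  with alg_gen_subset_rees[OF assms(2)] show ?thesis
    unfolding fin_gen_alg_def using assms(1,2) by blast
qed

lemma fin_gen_rees_imp_fin_gen_gr:
  assumes "fin_gen_alg (const_polys K) (rees D)"
  shows "fin_gen_alg_mod (const_polys K) (rees D) (gr_ideal D)"
proof -
  obtain S where "finite S" "S \<subseteq> rees D" and S: "alg_gen (const_polys K) S = rees D"
    using assms unfolding fin_gen_alg_def by blast
  have "\<forall>b\<in>rees D. \<exists>g\<in>alg_gen (const_polys K) S. b - g \<in> gr_ideal D"
    using S zero_mem_gr_ideal by (metis diff_self)
  then show ?thesis
    unfolding fin_gen_alg_mod_def using \<open>finite S\<close> \<open>S \<subseteq> rees D\<close> by blast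
qed

lemma monom_mem_alg_gen_of_gr_gens:
  assumes S: "\<forall>b\<in>rees D. \<exists>g\<in>alg_gen (const_polys K) S. b - g \<in> gr_ideal D"
    and "a \<in> filt D n"
  shows "monom a n \<in> alg_gen (const_polys K) (insert (monom 1 1) (homog_parts S))"
    (is "_ \<in> alg_gen _ ?G")
  using assms(2)
proof (induction n arbitrary: a rule: less_induct)
  case (less n)
  have "monom a n \<in> rees D"
    using less.prems by (simp add: monom_mem_rees_iff)
  then obtain g where g: "g \<in> alg_gen (const_polys K) S" "monom a n - g \<in> gr_ideal D"
    using S by blast
  define e where "e = a - coeff g n"
  have "coeff (monom a n - g) n \<in> filt_prev D n"
    using g(2) unfolding gr_ideal_def by blast
  then have e: "e \<in> filt_prev D n"
    by (simp add: e_def)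
  have "monom e n \<in> alg_gen (const_polys K) ?G"
  proof (cases n)
    case 0
    then show ?thesis
      using e zero_mem_alg_gen_const_polys[OF zero_mem_scalars] by (simp add: filt_prev_def)
  next
    case (Suc m)
    then have "monom e n = monom 1 1 * monom e m"
      by (simp add: mult_monom)
    moreover have "monom e m \<in> alg_gen (const_polys K) ?G"
      using less.IH e Suc by (simp add: filt_prev_def)
    ultimately show ?thesis
      by (simp add: alg_gen.gen alg_gen.mult)
  qed
  moreover have "homog_part n g \<in> alg_gen (const_polys K) ?G"
  proof (rule homog_part_mem_alg_gen[OF zero_mem_scalars])
    show "\<forall>s\<in>?G. \<exists>a m. s = monom a m"
      using homog_parts_monom by blast
    show "g \<in> alg_gen (const_polys K) ?G"
      using g(1) alg_gen_subset_alg_gen_homog_parts[OF zero_mem_scalars] by blast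
  qed
  moreover have "monom a n = homog_part n g + monom e n"
    by (simp add: homog_part_def e_def add_monom)
  ultimately show ?case
    by (simp add: alg_gen.add)
qed

lemma fin_gen_gr_imp_fin_gen_rees:
  assumes "fin_gen_alg_mod (const_polys K) (rees D) (gr_ideal D)"
  shows "fin_gen_alg (const_polys K) (rees D)"
proof -
  obtain S where "finite S" "S \<subseteq> rees D"
    and S: "\<forall>b\<in>rees D. \<exists>g\<in>alg_gen (const_polys K) S. b - g \<in> gr_ideal D"
    using assms unfolding fin_gen_alg_mod_def by blast
  define G where "G = insert (monom 1 1) (homog_parts S)"
  have "finite G"
    by (simp add: G_def \<open>finite S\<close> finite_homog_parts)
  moreover have "G \<subseteq> rees D"
    unfolding G_def using monom_1_1_mem_rees \<open>S \<subseteq> rees D\<close>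
    by (auto simp: homog_parts_def homog_part_mem_rees)
  moreover have "monom a n \<in> alg_gen (const_polys K) G" if "a \<in> filt D n" for a n
    unfolding G_def using S that by (rule monom_mem_alg_gen_of_gr_gens)
  ultimately show ?thesis
    by (rule fin_gen_alg_reesI)
qed

lemma fin_gen_rees_imp_fin_gen_kernel:
  assumes "fin_gen_alg (const_polys K) (rees D)"
  shows "fin_gen_alg K (filt D 0)"
proof -
  obtain S where "finite S" "S \<subseteq> rees D" and S: "alg_gen (const_polys K) S = rees D"
    using assms unfolding fin_gen_alg_def by blast
  define S0 where "S0 = (\<lambda>s. coeff s 0) ` S"
  have "S0 \<subseteq> filt D 0"
    using \<open>S \<subseteq> rees D\<close> by (auto simp: S0_def rees_def)
  have "alg_gen K S0 \<subseteq> filt D 0"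
    using \<open>S0 \<subseteq> filt D 0\<close> filt_mult[of _ 0 _ 0]
    by (intro alg_gen_minimal) (auto simp: scalar_mem_filt filt_add)
  moreover have "filt D 0 \<subseteq> alg_gen K S0"
  proof
    fix c assume "c \<in> filt D 0"
    then have "[:c:] \<in> alg_gen (const_polys K) S"
      by (simp add: S const_poly_mem_rees_iff)
    then show "c \<in> alg_gen K S0"
      using coeff_0_mem_alg_gen unfolding S0_def by fastforce
  qed
  ultimately show ?thesis
    unfolding fin_gen_alg_def using \<open>finite S\<close> \<open>S0 \<subseteq> filt D 0\<close> S0_def by blast
qed

lemma diff_const_coeff_mem_module_span:
  assumes "finite S" "alg_gen (const_polys K) S = rees D" "p \<in> rees D"
  shows "p - [:coeff p 0:] \<in> module_span (rees D) ((\<lambda>s. s - [:coeff s 0:]) ` S)"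
    (is "_ \<in> ?M")
proof -
  have "p \<in> alg_gen (const_polys K) S"
    using assms(2,3) by simp
  then show ?thesis
  proof (induction rule: alg_gen.induct)
    case (scal c)
    then show ?case
      by (auto simp: const_polys_def zero_mem_module_span zero_mem_rees)
  next
    case (gen s)
    then show ?case
      using assms(1) by (intro mem_module_span zero_mem_rees one_mem_rees) auto
  next
    case (add x y)
    have "x + y - [:coeff (x + y) 0:] = (x - [:coeff x 0:]) + (y - [:coeff y 0:])"
      by (simp add: algebra_simps)
    also have "\<dots> \<in> ?M"
      using rees_add add.IH by (rule module_span_add)
    finally show ?case .
  next
    case (mult x y)
    have "y \<in> rees D" "[:coeff x 0:] \<in> rees D"
      using mult.hyps assms(2) by (auto simp: const_coeff_mem_rees)
    have "x * y - [:coeff (x * y) 0:] = y * (x - [:coeff x 0:]) + [:coeff x 0:] * (y - [:coeff y 0:])"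
      by (simp add: coeff_mult_0 algebra_simps)
    also have "\<dots> \<in> ?M"
      using mult.IH \<open>y \<in> rees D\<close> \<open>[:coeff x 0:] \<in> rees D\<close>
      by (intro module_span_add module_span_mult) (simp_all add: rees_add rees_mult)
    finally show ?case .
  qed
qed

lemma fin_gen_rees_imp_fin_gen_rees_plus:
  assumes "fin_gen_alg (const_polys K) (rees D)"
  shows "fin_gen_module (rees D) (rees_plus D)"
proof -
  obtain S where "finite S" "S \<subseteq> rees D" and S: "alg_gen (const_polys K) S = rees D"
    using assms unfolding fin_gen_alg_def by blast
  define T where "T = (\<lambda>s. s - [:coeff s 0:]) ` S"
  have "finite T"
    by (simp add: T_def \<open>finite S\<close>)
  have "T \<subseteq> rees_plus D"
    using \<open>S \<subseteq> rees D\<close> by (auto simp: T_def rees_plus_def rees_diff const_coeff_mem_rees)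
  have "rees_plus D \<subseteq> module_span (rees D) T"
    using diff_const_coeff_mem_module_span[OF \<open>finite S\<close> S] by (force simp: rees_plus_def T_def)
  with module_span_subset_rees_plus[OF \<open>T \<subseteq> rees_plus D\<close>] show ?thesis
    unfolding fin_gen_module_iff using \<open>finite T\<close> \<open>T \<subseteq> rees_plus D\<close> by blast
qed

lemma homog_part_module_span_mem_alg_gen:
  assumes "finite T" "T \<subseteq> rees_plus D" "homog_parts T \<subseteq> G"
    and lower: "\<And>b i. i < n \<Longrightarrow> b \<in> filt D i \<Longrightarrow> monom b i \<in> alg_gen (const_polys K) G"
    and "x \<in> module_span (rees D) T"
  shows "homog_part n x \<in> alg_gen (const_polys K) G"
proof -
  obtain r where r: "\<forall>t\<in>T. r t \<in> rees D" "x = (\<Sum>t\<in>T. r t * t)"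
    using assms(5) unfolding module_span_def by blast
  have "homog_part n x = (\<Sum>t\<in>T. \<Sum>i\<le>n. homog_part i (r t) * homog_part (n - i) t)"
    by (simp add: r(2) homog_part_sum homog_part_mult)
  also have "\<dots> \<in> alg_gen (const_polys K) G"
  proof (intro alg_gen_sum[OF zero_mem_alg_gen_const_polys[OF zero_mem_scalars]] \<open>finite T\<close> finite_atMost)
    fix t i assume t: "t \<in> T" and i: "i \<in> {..n}"
    show "homog_part i (r t) * homog_part (n - i) t \<in> alg_gen (const_polys K) G"
    proof (cases "i = n")
      case True
      then have "homog_part (n - i) t = 0"
        using t \<open>T \<subseteq> rees_plus D\<close> by (auto simp: homog_part_def rees_plus_def)
      then show ?thesis
        by (simp add: zero_mem_alg_gen_const_polys[OF zero_mem_scalars])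
    next
      case False
      then have "homog_part i (r t) \<in> alg_gen (const_polys K) G"
        using lower i r(1) t by (auto simp: homog_part_def rees_def)
      moreover have "homog_part (n - i) t \<in> alg_gen (const_polys K) G"
        using homog_part_mem_alg_gen_homog_parts[OF zero_mem_scalars assms(3) t] .
      ultimately show ?thesis
        by (rule alg_gen.mult)
    qed
  qed
  finally show ?thesis .
qed

lemma monom_mem_alg_gen_of_kernel_rees_plus_gens:
  assumes S0: "alg_gen K S0 = filt D 0"
    and T: "finite T" "T \<subseteq> rees_plus D" "rees_plus D = module_span (rees D) T"
    and "a \<in> filt D n"
  shows "monom a n \<in> alg_gen (const_polys K) ((\<lambda>c. [:c:]) ` S0 \<union> homog_parts T)"
    (is "_ \<in> alg_gen _ ?G")
  using assms(5)
proof (induction n arbitrary: a rule: less_induct)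
  case (less n)
  show ?case
  proof (cases n)
    case 0
    then have "[:a:] \<in> alg_gen (const_polys K) ((\<lambda>c. [:c:]) ` S0)"
      using less.prems S0 const_poly_mem_alg_gen by blast
    then show ?thesis
      using 0 alg_gen_mono[of "(\<lambda>c. [:c:]) ` S0" "const_polys K" ?G]
      by (auto simp: monom_0 intro: alg_gen.gen)
  next
    case (Suc m)
    then have "monom a n \<in> module_span (rees D) T"
      using less.prems by (simp add: T(3)[symmetric] rees_plus_def monom_mem_rees_iff)
    then have "homog_part n (monom a n) \<in> alg_gen (const_polys K) ?G"
      using T(1,2) less.IH by (intro homog_part_module_span_mem_alg_gen) auto
    then show ?thesis
      by (simp add: homog_part_monom)
  qed
qed

lemma fin_gen_kernel_rees_plus_imp_fin_gen_rees:
  assumes "fin_gen_alg K (filt D 0)" and "fin_gen_module (rees D) (rees_plus D)"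
  shows "fin_gen_alg (const_polys K) (rees D)"
proof -
  obtain S0 where "finite S0" "S0 \<subseteq> filt D 0" and S0: "alg_gen K S0 = filt D 0"
    using assms(1) unfolding fin_gen_alg_def by blast
  obtain T where T: "finite T" "T \<subseteq> rees_plus D" "rees_plus D = module_span (rees D) T"
    using assms(2) unfolding fin_gen_module_iff by blast
  define G where "G = (\<lambda>c. [:c:]) ` S0 \<union> homog_parts T"
  have "finite G"
    by (simp add: G_def \<open>finite S0\<close> T(1) finite_homog_parts)
  moreover have "G \<subseteq> rees D"
    using \<open>S0 \<subseteq> filt D 0\<close> T(2)
    by (auto simp: G_def homog_parts_def const_poly_mem_rees_iff rees_plus_def homog_part_mem_rees)
  moreover have "monom a n \<in> alg_gen (const_polys K) G" if "a \<in> filt D n" for a n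
    unfolding G_def using S0 T that by (rule monom_mem_alg_gen_of_kernel_rees_plus_gens)
  ultimately show ?thesis
    by (rule fin_gen_alg_reesI)
qed

end

theorem lemma2p8:
  fixes K :: "'a::idom set" and D :: "'a \<Rightarrow> 'a"
  assumes "subfield K" and "alg_closed_sub K" and "char_zero_ring TYPE('a)"
    and "finite_type_alg K" and "normal_domain TYPE('a)"
    and "k_derivation K D" and "locally_nilpotent D"
  shows "(fin_gen_alg (const_polys K) (rees D) \<longleftrightarrow>
            fin_gen_alg_mod (const_polys K) (rees D) (gr_ideal D))
       \<and> (fin_gen_alg_mod (const_polys K) (rees D) (gr_ideal D) \<longleftrightarrow>
            (fin_gen_alg K (filt D 0) \<and> fin_gen_module (rees D) (rees_plus D)))"
proof -
  have "0 \<in> K"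
    using assms(1) unfolding subfield_def by blast
  then interpret rees_setting K D
    using assms(6) by unfold_locales
  show ?thesis
    using fin_gen_rees_imp_fin_gen_gr fin_gen_gr_imp_fin_gen_rees fin_gen_rees_imp_fin_gen_kernel
      fin_gen_rees_imp_fin_gen_rees_plus fin_gen_kernel_rees_plus_imp_fin_gen_rees
    by blast
qed

end
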